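(* Let $(\Omega,\mathcal{F})$ be a measurable space and $\{X_n:n\ge1\}$ a non-constant sequence of real-valued random variables that is $\sigma$-logically independent and identically distributed. Then there exists a probability measure $P$ on $\big(\Omega,\sigma(\{\sigma(X_n):n\ge1\})\big)$ under which $X_1$ has finite positive variance $\sigma_P^2$ and \[ \lim_{n\to\infty}P\Big(\frac{S_n-n\mu_P}{\sigma_P\sqrt n}\le x\Big)=\int_{-\infty}^x\frac{1}{\sqrt{2\pi}}e^{-t^2/2}\,dt\quad\text{for all }x\in\mathbb{R}, \] where $S_n=\sum_{i=1}^nX_i$ and $\mu_P=E_P[X_1]$.
   Context: A set $A$ is nontrivial if $A\neq\emptyset$, $A\neq\Omega$. A family of sub-$\sigma$-algebras $\{\mathcal{F}_i:i\in I\}$ is $\sigma$-logically independent if for every finite or countably infinite set of distinct indices $\{i_j\}\subset I$ and every choice of nontrivial $A_{i_j}\in\mathcal{F}_{i_j}$, $\bigcap_jA_{i_j}\neq\emptyset$. A family of random variables $\{X_i\}$ is $\sigma$-logically independent if $\{\sigma(X_i)\}$ is $\sigma$-logically independent (each $\sigma(X_i)$ assumed nontrivial, i.e. $X_i$ non-constant). It is $\sigma$-logically independent and identically distributed (l.i.i.d.) if in addition all $X_i$ have the same range, i.e. $X_i(\Omega)=X_j(\Omega)$ for all $i,j$. *)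

theory Defs
  imports "HOL-Probability.Probability"
begin

definition rv_sigma :: "'a measure \<Rightarrow> ('a \<Rightarrow> real) \<Rightarrow> 'a set set" where
  "rv_sigma M X = sets (vimage_algebra (space M) X borel)"

definition nontrivial_set :: "'a measure \<Rightarrow> 'a set \<Rightarrow> bool" where
  "nontrivial_set M A \<longleftrightarrow> A \<noteq> {} \<and> A \<noteq> space M"

definition sigma_logically_independent ::
    "'a measure \<Rightarrow> 'i set \<Rightarrow> ('i \<Rightarrow> 'a set set) \<Rightarrow> bool" where
  "sigma_logically_independent M I F \<longleftrightarrow>
     (\<forall>J A. J \<subseteq> I \<longrightarrow> countable J \<longrightarrow> J \<noteq> {} \<longrightarrow>
        (\<forall>j\<in>J. A j \<in> F j \<and> nontrivial_set M (A j)) \<longrightarrow> (\<Inter>j\<in>J. A j) \<noteq> {})"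

definition sigma_logically_independent_rvs ::
    "'a measure \<Rightarrow> 'i set \<Rightarrow> ('i \<Rightarrow> 'a \<Rightarrow> real) \<Rightarrow> bool" where
  "sigma_logically_independent_rvs M I X \<longleftrightarrow>
     (\<forall>i\<in>I. \<exists>\<omega>\<in>space M. \<exists>\<omega>'\<in>space M. X i \<omega> \<noteq> X i \<omega>') \<and>
     sigma_logically_independent M I (\<lambda>i. rv_sigma M (X i))"

text \<open>sigma-logically independent and identically distributed (same range).\<close>
definition liid :: "'a measure \<Rightarrow> 'i set \<Rightarrow> ('i \<Rightarrow> 'a \<Rightarrow> real) \<Rightarrow> bool" where
  "liid M I X \<longleftrightarrow> sigma_logically_independent_rvs M I X \<and>
     (\<forall>i\<in>I. \<forall>j\<in>I. X i ` space M = X j ` space M)"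

end

theory Submission
  imports Defs
begin

text \<open>Pick two values a \<noteq> b in the common range of the X n. By logical independence the events
  {X n = a} and {X n = b}, one for each n, can be intersected along any prescribed pattern, so
  every coin-tossing sequence \<omega> \<in> {True, False}^\<nat> is realized by a point g \<omega> of \<Omega> with
  X n (g \<omega>) = (if \<omega> (n - 1) then a else b). The map g is measurable into \<sigma>(X n : n \<ge> 1), and
  the image under g of the fair coin-tossing measure makes the X n i.i.d. with two equally likely
  values, mean (a + b) / 2 and variance ((a - b) / 2)^2. The classical central limit theorem
  then gives the claim.\<close>

lemma cdf_std_normal_distribution:
  "cdf std_normal_distribution x = (LBINT t:{..x}. exp (- (t\<^sup>2) / 2) / sqrt (2 * pi))"
proof -
  have "cdf std_normal_distribution x = integral\<^sup>L std_normal_distribution (indicator {..x})"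
    by (simp add: cdf_def)
  also have "\<dots> = (LINT t|lborel. std_normal_density t * indicator {..x} t)"
    by (subst integral_density) auto
  also have "\<dots> = (LBINT t:{..x}. exp (- (t\<^sup>2) / 2) / sqrt (2 * pi))"
    unfolding set_lebesgue_integral_def
    by (intro Bochner_Integration.integral_cong) (auto simp: std_normal_density_def split: split_indicator)
  finally show ?thesis .
qed

lemma isCont_cdf_std_normal_distribution: "isCont (cdf std_normal_distribution) x"
proof -
  interpret real_distribution std_normal_distribution by (rule real_dist_normal_dist)
  have "measure std_normal_distribution {x} = integral\<^sup>L std_normal_distribution (indicator {x})"
    by simp
  also have "\<dots> = (LINT t|lborel. std_normal_density t * indicator {x} t)"
    by (subst integral_density) auto
  also have "\<dots> = 0"
    by (rule integral_eq_zero_AE, rule eventually_mono[OF AE_lborel_singleton[of x]])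
      (auto split: split_indicator)
  finally show ?thesis by (simp add: isCont_cdf)
qed

lemma (in prob_space) central_limit_theorem_cdf:
  fixes X :: "nat \<Rightarrow> 'a \<Rightarrow> real"
  assumes indep: "indep_vars (\<lambda>i. borel) X UNIV"
    and "\<And>n. expectation (X n) = m"
    and "\<sigma> > 0"
    and "\<And>n. integrable M (\<lambda>x. (X n x)\<^sup>2)"
    and "\<And>n. variance (X n) = \<sigma>\<^sup>2"
    and "\<And>n. distr M borel (X n) = \<mu>"
  shows "(\<lambda>n. prob {\<omega> \<in> space M. (\<Sum>i<n. X i \<omega> - m) / sqrt (real n * \<sigma>\<^sup>2) \<le> x})
           \<longlonglongrightarrow> cdf std_normal_distribution x"
proof -
  have [measurable]: "X i \<in> borel_measurable M" for i
    using indep unfolding indep_vars_def2 by simp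
  have "prob {\<omega> \<in> space M. (\<Sum>i<n. X i \<omega> - m) / sqrt (real n * \<sigma>\<^sup>2) \<le> x}
      = cdf (distr M borel (\<lambda>\<omega>. (\<Sum>i<n. X i \<omega> - m) / sqrt (real n * \<sigma>\<^sup>2))) x" for n
    by (simp add: cdf_def measure_distr vimage_def Int_def conj_commute)
  then show ?thesis
    using central_limit_theorem[OF assms] isCont_cdf_std_normal_distribution[of x]
    unfolding weak_conv_m_def weak_conv_def by simp
qed

definition coin_tossing :: "(nat \<Rightarrow> bool) measure" where
  "coin_tossing = (\<Pi>\<^sub>M k\<in>UNIV. measure_pmf (bernoulli_pmf (1/2)))"

lemma prob_space_coin_tossing: "prob_space coin_tossing"
  unfolding coin_tossing_def by (intro prob_space_PiM measure_pmf.prob_space_axioms)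

lemma space_coin_tossing [simp]: "space coin_tossing = UNIV"
  by (simp add: coin_tossing_def space_PiM)

lemma measurable_coin_tossing_coordinate:
  "(\<lambda>\<omega>. \<omega> k) \<in> measurable coin_tossing (measure_pmf (bernoulli_pmf (1/2)))"
  unfolding coin_tossing_def by simp

lemma borel_measurable_coin_tossing_coordinate [measurable]:
  "(\<lambda>\<omega>. h (\<omega> k)) \<in> borel_measurable coin_tossing"
  unfolding coin_tossing_def by simp

lemma distr_coin_tossing_coordinate:
  "distr coin_tossing (measure_pmf (bernoulli_pmf (1/2))) (\<lambda>\<omega>. \<omega> k) = measure_pmf (bernoulli_pmf (1/2))"
  unfolding coin_tossing_def
  by (rule distr_PiM_component) (simp_all add: measure_pmf.prob_space_axioms)

lemma
  fixes h :: "bool \<Rightarrow> real"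
  shows integrable_coin_tossing_coordinate: "integrable coin_tossing (\<lambda>\<omega>. h (\<omega> k))"
    and integral_coin_tossing_coordinate: "(\<integral>\<omega>. h (\<omega> k) \<partial>coin_tossing) = (h True + h False) / 2"
proof -
  note comp = measurable_coin_tossing_coordinate[of k]
  show "integrable coin_tossing (\<lambda>\<omega>. h (\<omega> k))"
    using integrable_distr_eq[OF comp, of h] distr_coin_tossing_coordinate[of k]
    by (simp add: integrable_measure_pmf_finite)
  show "(\<integral>\<omega>. h (\<omega> k) \<partial>coin_tossing) = (h True + h False) / 2"
    using integral_distr[OF comp, of h] distr_coin_tossing_coordinate[of k] by simp
qed

lemma indep_vars_coin_tossing:
  fixes h :: "bool \<Rightarrow> real"
  shows "prob_space.indep_vars coin_tossing (\<lambda>_. borel) (\<lambda>k \<omega>. h (\<omega> k)) UNIV"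
proof -
  interpret prob_space coin_tossing by (rule prob_space_coin_tossing)
  have "indep_vars (\<lambda>_. measure_pmf (bernoulli_pmf (1/2))) (\<lambda>k \<omega>. \<omega> k) UNIV"
    by (subst indep_vars_iff_distr_eq_PiM)
      (simp_all add: distr_coin_tossing_coordinate restrict_UNIV, simp_all add: coin_tossing_def)
  then show ?thesis
    by (rule indep_vars_compose2[where Y = "\<lambda>_. h"]) simp
qed

lemma central_limit_coin_tossing:
  fixes h :: "bool \<Rightarrow> real"
  assumes "h True \<noteq> h False"
  defines "m \<equiv> (h True + h False) / 2" and "\<sigma> \<equiv> \<bar>h True - h False\<bar> / 2"
  shows "(\<lambda>n. measure coin_tossing {\<omega>. (\<Sum>i<n. h (\<omega> i) - m) / sqrt (real n * \<sigma>\<^sup>2) \<le> x})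
           \<longlonglongrightarrow> cdf std_normal_distribution x"
proof -
  interpret prob_space coin_tossing by (rule prob_space_coin_tossing)
  have mean: "expectation (\<lambda>\<omega>. h (\<omega> k)) = m" for k
    by (simp add: integral_coin_tossing_coordinate m_def)
  have variance: "variance (\<lambda>\<omega>. h (\<omega> k)) = \<sigma>\<^sup>2" for k
    by (simp add: mean integral_coin_tossing_coordinate[where h = "\<lambda>c. (h c - m)\<^sup>2"])
      (simp add: m_def \<sigma>_def power2_eq_square field_simps abs_mult_self_eq)
  have "distr coin_tossing borel (\<lambda>\<omega>. h (\<omega> k)) = distr (measure_pmf (bernoulli_pmf (1/2))) borel h" for k
    using distr_distr[OF _ measurable_coin_tossing_coordinate, of h borel k]
    by (simp add: distr_coin_tossing_coordinate comp_def)
  from central_limit_theorem_cdf[OF indep_vars_coin_tossing mean _ _ variance this]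
  show ?thesis using assms(1) by (simp add: \<sigma>_def integrable_coin_tossing_coordinate[where h = "\<lambda>c. (h c)\<^sup>2"])
qed

lemma moments_distr_coin_tossing:
  fixes h :: "bool \<Rightarrow> real" and Y :: "'a \<Rightarrow> real"
  assumes g: "g \<in> measurable coin_tossing N" and Y [measurable]: "Y \<in> borel_measurable N"
    and Y_g: "\<And>\<omega>. Y (g \<omega>) = h (\<omega> k)"
  defines "m \<equiv> (h True + h False) / 2" and "\<sigma> \<equiv> \<bar>h True - h False\<bar> / 2"
  shows "integrable (distr coin_tossing N g) Y"
    and "integrable (distr coin_tossing N g) (\<lambda>\<omega>. (Y \<omega>)\<^sup>2)"
    and "(\<integral>\<omega>. Y \<omega> \<partial>distr coin_tossing N g) = m"
    and "(\<integral>\<omega>. (Y \<omega> - m)\<^sup>2 \<partial>distr coin_tossing N g) = \<sigma>\<^sup>2"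
proof -
  have law: "integrable (distr coin_tossing N g) (\<lambda>\<omega>. f (Y \<omega>))
      \<and> (\<integral>\<omega>. f (Y \<omega>) \<partial>distr coin_tossing N g) = (f (h True) + f (h False)) / 2"
    if [measurable]: "f \<in> borel_measurable borel" for f :: "real \<Rightarrow> real"
    using integrable_coin_tossing_coordinate[of "f \<circ> h" k] integral_coin_tossing_coordinate[of "f \<circ> h" k]
    by (simp add: integrable_distr_eq[OF g] integral_distr[OF g] Y_g)
  show "integrable (distr coin_tossing N g) Y" "(\<integral>\<omega>. Y \<omega> \<partial>distr coin_tossing N g) = m"
    using law[of "\<lambda>y. y"] by (simp_all add: m_def)
  show "integrable (distr coin_tossing N g) (\<lambda>\<omega>. (Y \<omega>)\<^sup>2)"
    using law[of "\<lambda>y. y\<^sup>2"] by simp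
  show "(\<integral>\<omega>. (Y \<omega> - m)\<^sup>2 \<partial>distr coin_tossing N g) = \<sigma>\<^sup>2"
    using law[of "\<lambda>y. (y - m)\<^sup>2"]
    by (simp add: m_def \<sigma>_def power2_eq_square field_simps abs_mult_self_eq)
qed

lemma measure_distr_coin_tossing_normalized_sum:
  fixes h :: "bool \<Rightarrow> real" and X :: "nat \<Rightarrow> 'a \<Rightarrow> real"
  assumes g: "g \<in> measurable coin_tossing N"
    and X: "\<And>n. n \<ge> 1 \<Longrightarrow> X n \<in> borel_measurable N"
    and X_g: "\<And>\<omega> n. n \<ge> 1 \<Longrightarrow> X n (g \<omega>) = h (\<omega> (n - 1))"
  shows "measure (distr coin_tossing N g)
           {\<omega> \<in> space N. ((\<Sum>i=1..n. X i \<omega>) - real n * m) / (sqrt s * sqrt (real n)) \<le> x}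
       = measure coin_tossing {\<omega>. (\<Sum>i<n. h (\<omega> i) - m) / sqrt (real n * s) \<le> x}"
proof -
  define Z where "Z \<omega> = ((\<Sum>i=1..n. X i \<omega>) - real n * m) / (sqrt s * sqrt (real n))" for \<omega>
  have "Z \<in> borel_measurable N"
    unfolding Z_def using X
    by (intro borel_measurable_divide borel_measurable_diff borel_measurable_sum) auto
  then have "measure (distr coin_tossing N g) {\<omega> \<in> space N. Z \<omega> \<le> x}
      = measure coin_tossing (g -` {\<omega> \<in> space N. Z \<omega> \<le> x} \<inter> space coin_tossing)"
    by (intro measure_distr g) simp
  also have "g -` {\<omega> \<in> space N. Z \<omega> \<le> x} \<inter> space coin_tossing
      = {\<omega>. (\<Sum>i<n. h (\<omega> i) - m) / sqrt (real n * s) \<le> x}"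
  proof -
    have "(\<Sum>i=1..n. X i (g \<omega>)) = (\<Sum>i<n. h (\<omega> i))" for \<omega>
      using X_g by (simp add: sum.atLeast1_atMost_eq)
    then have "Z (g \<omega>) = (\<Sum>i<n. h (\<omega> i) - m) / sqrt (real n * s)" for \<omega>
      by (simp add: Z_def sum_subtractf real_sqrt_mult mult.commute)
    then show ?thesis
      using measurable_space[OF g] by auto
  qed
  finally show ?thesis
    by (simp only: Z_def)
qed

lemma central_limit_distr_coin_tossing:
  fixes h :: "bool \<Rightarrow> real" and X :: "nat \<Rightarrow> 'a \<Rightarrow> real"
  assumes g: "g \<in> measurable coin_tossing N"
    and X: "\<And>n. n \<ge> 1 \<Longrightarrow> X n \<in> borel_measurable N"
    and X_g: "\<And>\<omega> n. n \<ge> 1 \<Longrightarrow> X n (g \<omega>) = h (\<omega> (n - 1))"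
    and "h True \<noteq> h False"
  defines "m \<equiv> (h True + h False) / 2" and "\<sigma> \<equiv> \<bar>h True - h False\<bar> / 2"
  shows "(\<lambda>n. measure (distr coin_tossing N g) {\<omega> \<in> space N.
             ((\<Sum>i=1..n. X i \<omega>) - real n * m) / (sqrt (\<sigma>\<^sup>2) * sqrt (real n)) \<le> x})
           \<longlonglongrightarrow> (LBINT t:{..x}. exp (- (t\<^sup>2) / 2) / sqrt (2 * pi))"
proof -
  have "measure (distr coin_tossing N g) {\<omega> \<in> space N.
      ((\<Sum>i=1..n. X i \<omega>) - real n * m) / (sqrt (\<sigma>\<^sup>2) * sqrt (real n)) \<le> x}
    = measure coin_tossing {\<omega>. (\<Sum>i<n. h (\<omega> i) - m) / sqrt (real n * \<sigma>\<^sup>2) \<le> x}" for n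
    by (rule measure_distr_coin_tossing_normalized_sum[OF g X X_g])
  then show ?thesis
    using central_limit_coin_tossing[OF \<open>h True \<noteq> h False\<close>, of x]
    by (simp add: m_def \<sigma>_def cdf_std_normal_distribution)
qed

lemma UN_rv_sigma_subset_Pow: "(\<Union>i\<in>I. rv_sigma M (X i)) \<subseteq> Pow (space M)"
  unfolding rv_sigma_def using sets.sets_into_space by fastforce

lemma measurable_sigma_rv_sigma:
  assumes "i \<in> I"
  shows "X i \<in> borel_measurable (sigma (space M) (\<Union>i\<in>I. rv_sigma M (X i)))"
proof (rule measurableI)
  fix C :: "real set"
  assume "C \<in> sets borel"
  then have "X i -` C \<inter> space M \<in> rv_sigma M (X i)"
    unfolding rv_sigma_def by (rule in_vimage_algebra)
  with assms have "X i -` C \<inter> space M \<in> sigma_sets (space M) (\<Union>i\<in>I. rv_sigma M (X i))"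
    by blast
  then show "X i -` C \<inter> space (sigma (space M) (\<Union>i\<in>I. rv_sigma M (X i)))
      \<in> sets (sigma (space M) (\<Union>i\<in>I. rv_sigma M (X i)))"
    by (simp add: UN_rv_sigma_subset_Pow)
qed (simp add: UN_rv_sigma_subset_Pow)

lemma measurable_into_sigma_rv_sigma:
  assumes g: "g \<in> space N \<rightarrow> space M"
    and X_g: "\<And>i. i \<in> I \<Longrightarrow> (\<lambda>\<omega>. X i (g \<omega>)) \<in> borel_measurable N"
  shows "g \<in> measurable N (sigma (space M) (\<Union>i\<in>I. rv_sigma M (X i)))"
proof (rule measurable_measure_of[OF _ g])
  show "(\<Union>i\<in>I. rv_sigma M (X i)) \<subseteq> Pow (space M)"
    by (rule UN_rv_sigma_subset_Pow)
  fix A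
  assume "A \<in> (\<Union>i\<in>I. rv_sigma M (X i))"
  then obtain i C where i: "i \<in> I" and C: "C \<in> sets borel" and A: "A = X i -` C \<inter> space M"
    by (auto simp: rv_sigma_def sets_vimage_algebra2)
  have "g -` A \<inter> space N = (\<lambda>\<omega>. X i (g \<omega>)) -` C \<inter> space N"
    using g by (auto simp: A)
  also have "\<dots> \<in> sets N"
    using measurable_sets[OF X_g[OF i] C] .
  finally show "g -` A \<inter> space N \<in> sets N" .
qed

lemma sigma_logically_independent_rvs_realize:
  assumes indep: "sigma_logically_independent_rvs M I X"
    and I: "countable I" "I \<noteq> {}"
    and c: "\<And>i. i \<in> I \<Longrightarrow> c i \<in> X i ` space M"
  shows "\<exists>y\<in>space M. \<forall>i\<in>I. X i y = c i"
proof -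
  define A where "A i = X i -` {c i} \<inter> space M" for i
  have "A i \<in> rv_sigma M (X i) \<and> nontrivial_set M (A i)" if i: "i \<in> I" for i
  proof (intro conjI)
    show "A i \<in> rv_sigma M (X i)"
      unfolding A_def rv_sigma_def by (rule in_vimage_algebra) simp
    obtain y where "y \<in> space M" "X i y = c i"
      using c[OF i] by (metis imageE)
    then have "A i \<noteq> {}"
      by (auto simp: A_def)
    moreover obtain u v where uv: "u \<in> space M" "v \<in> space M" "X i u \<noteq> X i v"
      using indep i unfolding sigma_logically_independent_rvs_def by blast
    have "A i \<noteq> space M"
    proof
      assume "A i = space M"
      with uv have "u \<in> A i" "v \<in> A i"
        by simp_all
      with uv(3) show False
        by (simp add: A_def)
    qed
    ultimately show "nontrivial_set M (A i)"
      by (simp add: nontrivial_set_def)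
  qed
  moreover have "sigma_logically_independent M I (\<lambda>i. rv_sigma M (X i))"
    using indep by (simp add: sigma_logically_independent_rvs_def)
  ultimately have "(\<Inter>i\<in>I. A i) \<noteq> {}"
    using I unfolding sigma_logically_independent_def by (metis order_refl)
  then show ?thesis
    using I(2) by (auto simp: A_def)
qed

lemma liid_embed_coin_tossing:
  fixes X :: "nat \<Rightarrow> 'a \<Rightarrow> real" and h :: "bool \<Rightarrow> real"
  assumes liid: "liid M {1..} X"
    and h: "\<And>c. h c \<in> X 1 ` space M"
  obtains g where "g \<in> measurable coin_tossing (sigma (space M) (\<Union>n\<in>{1..}. rv_sigma M (X n)))"
    and "\<And>\<omega> n. n \<ge> 1 \<Longrightarrow> X n (g \<omega>) = h (\<omega> (n - 1))"
proof -
  have range: "X n ` space M = X 1 ` space M" if "n \<in> {1..}" for n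
    using liid that unfolding liid_def by (metis atLeast_iff order_refl)
  have "\<exists>y\<in>space M. \<forall>n\<in>{1..}. X n y = h (\<omega> (n - 1))" for \<omega>
  proof (rule sigma_logically_independent_rvs_realize)
    show "sigma_logically_independent_rvs M {1..} X"
      using liid by (simp add: liid_def)
    show "h (\<omega> (n - 1)) \<in> X n ` space M" if "n \<in> {1..}" for n
      using h range[OF that] by simp
  qed auto
  then obtain g where g: "\<And>\<omega>. g \<omega> \<in> space M" "\<And>\<omega> n. n \<ge> 1 \<Longrightarrow> X n (g \<omega>) = h (\<omega> (n - 1))"
    by (metis atLeast_iff)
  have "g \<in> measurable coin_tossing (sigma (space M) (\<Union>n\<in>{1..}. rv_sigma M (X n)))"
    using g by (intro measurable_into_sigma_rv_sigma) auto
  with g show ?thesis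
    using that by blast
qed

theorem mainTheorem8:
  fixes M :: "'a measure" and X :: "nat \<Rightarrow> 'a \<Rightarrow> real"
  assumes meas: "\<And>n. n \<ge> 1 \<Longrightarrow> X n \<in> borel_measurable M"
    and nonconst: "\<And>n. n \<ge> 1 \<Longrightarrow> \<exists>\<omega>\<in>space M. \<exists>\<omega>'\<in>space M. X n \<omega> \<noteq> X n \<omega>'"
    and lind: "liid M {1..} X"
  shows "\<exists>P. prob_space P \<and> space P = space M \<and>
     sets P = sigma_sets (space M) (\<Union>n\<in>{1..}. rv_sigma M (X n)) \<and>
     integrable P (X 1) \<and> integrable P (\<lambda>\<omega>. (X 1 \<omega>)\<^sup>2) \<and>
     (let \<mu> = (\<integral>\<omega>. X 1 \<omega> \<partial>P);
          \<sigma>2 = (\<integral>\<omega>. (X 1 \<omega> - \<mu>)\<^sup>2 \<partial>P)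
      in \<sigma>2 > 0 \<and>
         (\<forall>x::real. (\<lambda>n::nat. measure P {\<omega> \<in> space P.
              ((\<Sum>i=1..n. X i \<omega>) - real n * \<mu>) / (sqrt \<sigma>2 * sqrt (real n)) \<le> x})
            \<longlonglongrightarrow> (LBINT t:{..x}. exp (- (t\<^sup>2) / 2) / sqrt (2 * pi))))"
proof -
  obtain a b where ab: "a \<in> X 1 ` space M" "b \<in> X 1 ` space M" "a \<noteq> b"
    using nonconst[of 1] by auto
  define h where "h c = (if c then a else b)" for c
  have h_range: "h c \<in> X 1 ` space M" for c
    using ab by (simp add: h_def)
  define M' where "M' = sigma (space M) (\<Union>n\<in>{1..}. rv_sigma M (X n))"
  obtain g where g: "g \<in> measurable coin_tossing M'"
    and X_g: "\<And>\<omega> n. n \<ge> 1 \<Longrightarrow> X n (g \<omega>) = h (\<omega> (n - 1))"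
    using liid_embed_coin_tossing[where h = h, OF lind h_range, folded M'_def] by blast
  have X_M': "X n \<in> borel_measurable M'" if "n \<ge> 1" for n
    unfolding M'_def using that by (intro measurable_sigma_rv_sigma) simp
  have X1_g: "X 1 (g \<omega>) = h (\<omega> 0)" for \<omega>
    using X_g[of 1] by simp
  note moments = moments_distr_coin_tossing[OF g X_M'[of 1, OF order_refl] X1_g, unfolded h_def if_True if_False]
  have "prob_space (distr coin_tossing M' g)"
    using prob_space_coin_tossing g by (rule prob_space.prob_space_distr)
  moreover have "space (distr coin_tossing M' g) = space M"
    "sets (distr coin_tossing M' g) = sigma_sets (space M) (\<Union>n\<in>{1..}. rv_sigma M (X n))"
    by (simp_all add: M'_def UN_rv_sigma_subset_Pow)
  moreover note central_limit_distr_coin_tossing[OF g X_M' X_g, unfolded h_def if_True if_False]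
  ultimately show ?thesis
    using moments ab(3)
    by (intro exI[of _ "distr coin_tossing M' g"]) (simp only: Let_def moments(3,4), simp)
qed

end
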